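(* For every positive integer $k$ there exists a nonzero integer $s$ such that, for every $1\le i\le k$, $s^2$ can be written as a sum of $i$ squares of nonzero integers. *)

theory Defs
  imports Main
begin

end

theory Submission
  imports Defs
begin

text \<open>The Pythagorean triple 3, 4, 5 splits one square into two nonzero squares at the
  cost of a factor 25: replacing \<open>a 0\<close> by \<open>3 a 0, 4 a 0\<close> and every other \<open>a j\<close> by
  \<open>5 a j\<close> turns a representation of \<open>x\<close> by \<open>n\<close> nonzero squares into one of \<open>25 x\<close> by
  \<open>n + 1\<close>. Hence \<open>25 ^ (i - 1)\<close> is a sum of \<open>i\<close> nonzero squares, and multiplying by the
  square \<open>25 ^ (k - i)\<close> shows that \<open>s = 5 ^ (k - 1)\<close> works for all \<open>i \<le> k\<close> at once.\<close>

definition sum_nonzero_squares :: "nat \<Rightarrow> 'a::comm_ring_1 \<Rightarrow> bool" where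
  "sum_nonzero_squares n x \<longleftrightarrow> (\<exists>a. (\<forall>j<n. a j \<noteq> 0) \<and> x = (\<Sum>j<n. (a j)\<^sup>2))"

lemma sum_nonzero_squares_one:
  "x \<noteq> 0 \<Longrightarrow> sum_nonzero_squares 1 (x\<^sup>2)"
  unfolding sum_nonzero_squares_def by (auto intro!: exI[of _ "\<lambda>_. x"])

lemma sum_nonzero_squares_mult_square:
  fixes c :: "'a::idom"
  assumes "sum_nonzero_squares n x" and "c \<noteq> 0"
  shows "sum_nonzero_squares n (c\<^sup>2 * x)"
proof -
  obtain a where nz: "\<forall>j<n. a j \<noteq> 0" and x: "x = (\<Sum>j<n. (a j)\<^sup>2)"
    using assms(1) unfolding sum_nonzero_squares_def by blast
  have "c\<^sup>2 * x = (\<Sum>j<n. (c * a j)\<^sup>2)"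
    by (simp add: x sum_distrib_left power_mult_distrib)
  moreover have "\<forall>j<n. c * a j \<noteq> 0"
    using nz \<open>c \<noteq> 0\<close> by simp
  ultimately show ?thesis
    unfolding sum_nonzero_squares_def by (intro exI[of _ "\<lambda>j. c * a j"]) simp
qed

lemma sum_nonzero_squares_Suc:
  fixes x :: "'a::{idom, ring_char_0}"
  assumes "sum_nonzero_squares n x" and "n \<ge> 1"
  shows "sum_nonzero_squares (Suc n) (25 * x)"
proof -
  obtain a where nz: "\<forall>j<n. a j \<noteq> 0" and x: "x = (\<Sum>j<n. (a j)\<^sup>2)"
    using assms(1) unfolding sum_nonzero_squares_def by blast
  define b where "b j = (if j = n then 4 * a 0 else if j = 0 then 3 * a 0 else 5 * a j)" for j
  have "a 0 \<noteq> 0" using nz \<open>n \<ge> 1\<close> by auto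
  then have nz_b: "\<forall>j<Suc n. b j \<noteq> 0" using nz by (auto simp: b_def)
  have "(\<Sum>j<n. (b j)\<^sup>2) = (\<Sum>j<n. 25 * (a j)\<^sup>2 - (if j = 0 then 16 * (a 0)\<^sup>2 else 0))"
    by (rule sum.cong) (auto simp: b_def power_mult_distrib)
  also have "\<dots> = 25 * x - 16 * (a 0)\<^sup>2"
    using \<open>n \<ge> 1\<close> by (simp add: x sum_subtractf sum_distrib_left)
  finally have "25 * x = (\<Sum>j<Suc n. (b j)\<^sup>2)"
    by (simp add: b_def power_mult_distrib)
  then show ?thesis
    unfolding sum_nonzero_squares_def using nz_b by (intro exI[of _ b]) simp
qed

lemma sum_nonzero_squares_25_power:
  "i \<ge> 1 \<Longrightarrow> sum_nonzero_squares i ((25::'a::{idom, ring_char_0}) ^ (i - 1))"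
proof (induction i rule: dec_induct)
  case base
  show ?case using sum_nonzero_squares_one[of "1::'a"] by simp
next
  case (step n)
  have "(25::'a) ^ n = 25 * 25 ^ (n - 1)"
    using step.hyps(1) by (cases n) auto
  then show ?case
    using sum_nonzero_squares_Suc[OF step.IH step.hyps(1)] by (simp only: diff_Suc_1)
qed

theorem lemma7p2:
  fixes k :: nat
  assumes "k \<ge> 1"
  shows "\<exists>s::int. s \<noteq> 0 \<and>
           (\<forall>i\<in>{1..k}. \<exists>a :: nat \<Rightarrow> int.
              (\<forall>j<i. a j \<noteq> 0) \<and> s ^ 2 = (\<Sum>j<i. (a j) ^ 2))"
proof (intro exI[of _ "5 ^ (k - 1)"] conjI ballI)
  show "(5::int) ^ (k - 1) \<noteq> 0" by simp
  fix i assume i: "i \<in> {1..k}"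
  have five_square: "((5::int) ^ m)\<^sup>2 = 25 ^ m" for m
    by (simp add: power2_eq_square flip: power_mult_distrib)
  have "k - 1 = (k - i) + (i - 1)" using i by auto
  then have "((5::int) ^ (k - 1))\<^sup>2 = ((5::int) ^ (k - i))\<^sup>2 * 25 ^ (i - 1)"
    by (metis five_square power_add)
  moreover have "sum_nonzero_squares i (((5::int) ^ (k - i))\<^sup>2 * 25 ^ (i - 1))"
    using i by (intro sum_nonzero_squares_mult_square sum_nonzero_squares_25_power) auto
  ultimately have "sum_nonzero_squares i (((5::int) ^ (k - 1))\<^sup>2)"
    by (simp only:)
  then show "\<exists>a :: nat \<Rightarrow> int. (\<forall>j<i. a j \<noteq> 0) \<and> ((5::int) ^ (k - 1))\<^sup>2 = (\<Sum>j<i. (a j)\<^sup>2)"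
    unfolding sum_nonzero_squares_def .
qed

end
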